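(* Let $\{X_n\}$ be an absorbing random leap on $\{0,\dots,N\}$ with $N\ge k_p+k_q$, and for $i\in\{0,\dots,N\}$ let $u_i=P(X_n=N\text{ for some }n\ge0\mid X_0=i)$. Then $\det(\mathbf A_N\mathbf Z)\neq0$ and \[ u_i=\frac{\det(\mathbf A_i\mathbf Z)}{\det(\mathbf A_N\mathbf Z)}\qquad\text{for every } i\in\{0,\dots,N\}. \]
   Context: Fix an integer $k\ge1$ and nonnegative reals $p_1,\dots,p_k,q_1,\dots,q_k$ with $\sum_{j=1}^k(p_j+q_j)=1$, $\sum_{j=1}^k p_j>0$ and $\sum_{j=1}^k q_j>0$. Let $k_p=\max\{j:p_j>0\}$ and $k_q=\max\{j:q_j>0\}$. Let $\xi$ be a random variable with $P(\xi=\ell)=p_\ell$ and $P(\xi=-\ell)=q_\ell$ for $1\le\ell\le k$. The simple random leap is the Markov chain on $\mathbb Z$ with $P(X_{n+1}=j\mid X_n=i)=P(\xi=j-i)$. For an integer $N\ge k_p+k_q$, the absorbing random leap is the Markov chain on $\{0,\dots,N\}$ in which $0$ and $N$ are absorbing and, for $0<i<N$: $P(i\to j)=P(i+\xi=j)$ for $1\le j\le N-1$, $P(i\to0)=P(i+\xi\le0)$, $P(i\to N)=P(i+\xi\ge N)$. Characteristic polynomial: $\chi(z)=\sum_{j=0}^{2k-1}c_jz^j$ where $c_j=-\sum_{\ell=k-j}^k q_\ell$ for $0\le j\le k-1$ and $c_j=\sum_{\ell=j-k+1}^k p_\ell$ for $k\le j\le 2k-1$. Counted with multiplicity, $\chi$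 has exactly $r:=k_p+k_q-1$ nonzero roots; let $z_1,\dots,z_s$ be the distinct nonzero roots with multiplicities $r_1,\dots,r_s$ ($\sum r_j=r$). For each $j$ let $\mathbf Z^{(j)}$ be the $(N+r-1)\times r_j$ matrix with entries $Z^{(j)}_{i,\ell}=(i+1-k_q)^{\ell-1}z_j^{\,i+1-k_q}$ ($1\le i\le N+r-1$, $1\le\ell\le r_j$), with the convention $0^0=1$, and let $\mathbf Z=(\mathbf Z^{(1)}\ \cdots\ \mathbf Z^{(s)})$, an $(N+r-1)\times r$ matrix. Accordion matrix: for $i\in\{0,\dots,N\}$, $\mathbf A_i$ is the $r\times(N+r-1)$ matrix whose first $k_q-1$ rows are the unit row vectors $\tilde e_1^T,\dots,\tilde e_{k_q-1}^T$, whose $k_q$-th row has ones in columns $k_q,\dots,k_q+i-1$ and zeros elsewhere, and whose last $k_p-1$ rows are the unit row vectors $\tilde e_{N+k_q}^T,\dots,\tilde e_{N+r-1}^T$ (here $\tilde e_m$ denotes the $m$-th unit vector of length $N+r-1$). In block form $\mathbf A_i=\begin{pmatrix}I_{k_q-1}&0&0&0\\0&\mathbf 1_i^T&\mathbf 0_{N-i}^T&0\\0&0&0&I_{k_p-1}\end{pmatrix}$. *)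

theory Defs
  imports Complex_Main "HOL-Computational_Algebra.Polynomial" "Jordan_Normal_Form.Determinant"
begin

definition xi_prob :: "nat \<Rightarrow> (nat \<Rightarrow> real) \<Rightarrow> (nat \<Rightarrow> real) \<Rightarrow> int \<Rightarrow> real" where
  "xi_prob k p q d =
     (if 1 \<le> d \<and> d \<le> int k then p (nat d)
      else if - int k \<le> d \<and> d \<le> -1 then q (nat (- d)) else 0)"

definition leap_trans :: "nat \<Rightarrow> (nat \<Rightarrow> real) \<Rightarrow> (nat \<Rightarrow> real) \<Rightarrow> nat \<Rightarrow> nat \<Rightarrow> nat \<Rightarrow> real" where
  "leap_trans k p q N i j =
     (if i = 0 \<or> i = N then (if j = i then 1 else 0)
      else if j = 0 then (\<Sum>d\<in>{- int k..- int i}. xi_prob k p q d)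
      else if j = N then (\<Sum>d\<in>{int N - int i..int k}. xi_prob k p q d)
      else if j < N then xi_prob k p q (int j - int i)
      else 0)"

text \<open>hit_within P M t n i = probability that a Markov chain on {0..M} with transition
  matrix P, started at i, visits t at some time 0..n (Markov property recursion).\<close>
fun hit_within :: "(nat \<Rightarrow> nat \<Rightarrow> real) \<Rightarrow> nat \<Rightarrow> nat \<Rightarrow> nat \<Rightarrow> nat \<Rightarrow> real" where
  "hit_within P M t 0 i = (if i = t then 1 else 0)"
| "hit_within P M t (Suc n) i =
     (if i = t then 1 else (\<Sum>j\<le>M. P i j * hit_within P M t n j))"

text \<open>u_i = P(X_n = N for some n \<ge> 0 | X_0 = i), the limit of the probabilities of
  the increasing events "X_n = N for some n \<le> m".\<close>
definition absorb_prob :: "nat \<Rightarrow> (nat \<Rightarrow> real) \<Rightarrow> (nat \<Rightarrow> real) \<Rightarrow> nat \<Rightarrow> nat \<Rightarrow> real" where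
  "absorb_prob k p q N i = lim (\<lambda>m. hit_within (leap_trans k p q N) N N m i)"

definition kp :: "nat \<Rightarrow> (nat \<Rightarrow> real) \<Rightarrow> nat" where
  "kp k p = Max {j \<in> {1..k}. p j > 0}"

definition kq :: "nat \<Rightarrow> (nat \<Rightarrow> real) \<Rightarrow> nat" where
  "kq k q = Max {j \<in> {1..k}. q j > 0}"

definition char_coeff :: "nat \<Rightarrow> (nat \<Rightarrow> real) \<Rightarrow> (nat \<Rightarrow> real) \<Rightarrow> nat \<Rightarrow> real" where
  "char_coeff k p q j =
     (if j \<le> k - 1 then - (\<Sum>l\<in>{k - j..k}. q l)
      else (\<Sum>l\<in>{j - k + 1..k}. p l))"

definition char_poly :: "nat \<Rightarrow> (nat \<Rightarrow> real) \<Rightarrow> (nat \<Rightarrow> real) \<Rightarrow> complex poly" where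
  "char_poly k p q = Poly (map (\<lambda>j. complex_of_real (char_coeff k p q j)) [0..<2 * k])"

definition Z_cols :: "complex poly \<Rightarrow> complex list \<Rightarrow> (complex \<times> nat) list" where
  "Z_cols chi zs = concat (map (\<lambda>z. map (\<lambda>l. (z, l)) [1..<order z chi + 1]) zs)"

text \<open>The (N+r-1) x r matrix Z (rows 1..N+r-1, stored 0-indexed).\<close>
definition Z_mat :: "nat \<Rightarrow> nat \<Rightarrow> nat \<Rightarrow> complex poly \<Rightarrow> complex list \<Rightarrow> complex mat" where
  "Z_mat kq' r N chi zs =
     mat (N + r - 1) (length (Z_cols chi zs))
       (\<lambda>(i0, c). let i = int i0 + 1; e = i + 1 - int kq'; (z, l) = Z_cols chi zs ! c
                  in (of_int e) ^ (l - 1) * z powi e)"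

text \<open>The accordion matrix A_i, an r x (N+r-1) matrix (1-indexed rows a, columns m
  in the comment; stored 0-indexed).\<close>
definition accordion :: "nat \<Rightarrow> nat \<Rightarrow> nat \<Rightarrow> nat \<Rightarrow> complex mat" where
  "accordion kq' kp' N i =
     mat (kp' + kq' - 1) (N + (kp' + kq' - 1) - 1)
       (\<lambda>(a0, m0). let a = a0 + 1; m = m0 + 1 in
          if a < kq' then (if m = a then 1 else 0)
          else if a = kq' then (if kq' \<le> m \<and> m \<le> kq' + i - 1 then 1 else 0)
          else (if m = N + a - 1 then 1 else 0))"

end

theory Submission
  imports Defs "HOL-Computational_Algebra.Fundamental_Theorem_Algebra"
begin

text \<open>The absorption probabilities u are the unique solution of the Dirichlet problem of the chain
  (u 0 = 0, u N = 1, u harmonic at interior states), uniqueness coming from the maximum principle.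
  For a coefficient vector \<beta>, the sequence w = Z \<beta> solves the linear recurrence with
  characteristic polynomial \<chi>, and if w vanishes on the kq - 1 sites below 1 and on the kp - 1
  sites above N, then its partial sums h i = w 1 + ... + w i are harmonic. The rows of A i Z \<beta>
  are exactly these boundary values of w together with h i. Hence A N Z \<beta> = 0 forces h = 0, so w
  vanishes on N + r - 1 consecutive sites and \<beta> = 0 by the independence of exponential
  polynomials. Solving A N Z \<beta> = e_kq by Cramer's rule gives h = u, and since A i Z differs from
  A N Z only in row kq, u i = (A i Z \<beta>)_kq = det (A i Z) / det (A N Z).\<close>

lemma poly_pcompose_shift:
  fixes P :: "'a::comm_semiring_1 poly"
  shows "poly (pcompose P [:1, 1:]) x = poly P (x + 1)"
  by (simp add: poly_pcompose add.commute)

lemma coeff_pcompose_shift_degree: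
  fixes P :: "'a::idom poly"
  shows "coeff (pcompose P [:1, 1:]) (degree P) = coeff P (degree P)"
  using lead_coeff_comp[of "[:1, 1:]" P] degree_pcompose[of P "[:1, 1:]"]
  by (cases "degree P = 0") (auto elim!: degree_eq_zeroE)

lemma pcompose_shift_eq_self_imp_const:
  fixes P :: "'a::{idom, ring_char_0} poly"
  assumes "pcompose P [:1, 1:] = P"
  shows "P = [:poly P 0:]"
proof -
  have "poly P (of_nat n) = poly P 0" for n
  proof (induction n)
    case (Suc n)
    then show ?case using poly_pcompose_shift[of P "of_nat n"] assms by (simp add: add.commute)
  qed simp
  hence "range of_nat \<subseteq> {x. poly (P - [:poly P 0:]) x = 0}" by auto
  moreover have "infinite (range (of_nat :: nat \<Rightarrow> 'a))"
    by (rule range_inj_infinite) (simp add: inj_on_def)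
  ultimately have "P - [:poly P 0:] = 0" by (metis finite_subset poly_roots_finite)
  thus ?thesis by simp
qed

definition exp_shift :: "'a::comm_ring_1 \<Rightarrow> 'a \<Rightarrow> 'a poly \<Rightarrow> 'a poly" where
  "exp_shift z1 z P = smult z (pcompose P [:1, 1:]) - smult z1 P"

lemma poly_exp_shift:
  fixes z :: "'a::field_char_0"
  assumes "z \<noteq> 0"
  shows "poly (exp_shift z1 z P) (of_int e) * z powi e =
    poly P (of_int (e + 1)) * z powi (e + 1) - z1 * (poly P (of_int e) * z powi e)"
proof -
  have "z powi (e + 1) = z * z powi e" using assms by (simp add: power_int_add)
  then show ?thesis unfolding exp_shift_def by (simp add: poly_pcompose_shift algebra_simps)
qed

lemma coeff_exp_shift_same:
  fixes P :: "'a::idom poly"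
  assumes "degree P \<le> n"
  shows "coeff (exp_shift z z P) n = 0"
  using assms coeff_pcompose_shift_degree[of P]
  by (cases "n = degree P") (auto simp: exp_shift_def coeff_eq_0 degree_pcompose)

lemma coeff_exp_shift_above:
  fixes P :: "'a::idom poly"
  assumes "P = 0 \<or> degree P < n"
  shows "coeff (exp_shift z1 z P) n = 0"
  using assms by (auto simp: exp_shift_def coeff_eq_0 degree_pcompose)

lemma coeff_exp_shift_degree:
  fixes P :: "'a::idom poly"
  shows "coeff (exp_shift z1 z P) (degree P) = (z - z1) * lead_coeff P"
  using coeff_pcompose_shift_degree[of P] by (simp add: exp_shift_def algebra_simps)

lemma sum_poly_exp_shift:
  fixes S :: "'a::field_char_0 set"
  assumes "0 \<notin> S"
  shows "(\<Sum>z\<in>S. poly (exp_shift z1 z (Pz z)) (of_int e) * z powi e) =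
    (\<Sum>z\<in>S. poly (Pz z) (of_int (e + 1)) * z powi (e + 1)) - z1 * (\<Sum>z\<in>S. poly (Pz z) (of_int e) * z powi e)"
  unfolding sum_distrib_left sum_subtractf[symmetric]
  using assms by (intro sum.cong refl poly_exp_shift) auto

lemma exp_shift_vanishing_imp_zero:
  fixes S :: "'a::field_char_0 set"
  assumes "finite S" "0 \<notin> S" "z1 \<in> S" and shift: "\<forall>z\<in>S. exp_shift z1 z (Pz z) = 0"
    and "(\<Sum>z\<in>S. poly (Pz z) (of_int e) * z powi e) = 0"
  shows "\<forall>z\<in>S. Pz z = 0"
proof -
  have others: "Pz z = 0" if "z \<in> S" "z \<noteq> z1" for z
    using coeff_exp_shift_degree[of z1 z "Pz z"] shift that by auto
  have "z1 \<noteq> 0" using assms(2,3) by auto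
  have "exp_shift z1 z1 (Pz z1) = 0" using shift assms(3) by auto
  hence const: "Pz z1 = [:poly (Pz z1) 0:]"
    using \<open>z1 \<noteq> 0\<close> pcompose_shift_eq_self_imp_const by (simp add: exp_shift_def flip: smult_diff_right)
  have "(\<Sum>z\<in>S. poly (Pz z) (of_int e) * z powi e) = poly (Pz z1) (of_int e) * z1 powi e"
    using assms(1,3) others by (subst sum.remove[of S z1]) auto
  moreover have "poly (Pz z1) (of_int e) = poly (Pz z1) 0" by (subst const) simp
  ultimately have "poly (Pz z1) 0 = 0" using assms(5) \<open>z1 \<noteq> 0\<close> by simp
  hence "Pz z1 = 0" using const by simp
  with others show ?thesis by auto
qed

text \<open>Induction on the total degree bound: passing from f(e) to f(e + 1) - z1 f(e) lowers the degree
  of the polynomial attached to z1 and keeps the degree of all the others.\<close>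
lemma exp_poly_vanishing_imp_zero:
  fixes S :: "'a::field_char_0 set" and Pz :: "'a \<Rightarrow> 'a poly" and m :: "'a \<Rightarrow> nat"
  assumes "finite S" "0 \<notin> S"
    and "\<forall>z\<in>S. \<forall>n\<ge>m z. coeff (Pz z) n = 0" "(\<Sum>z\<in>S. m z) \<le> L"
    and "\<forall>t<L. (\<Sum>z\<in>S. poly (Pz z) (of_int (e + int t)) * z powi (e + int t)) = 0"
  shows "\<forall>z\<in>S. Pz z = 0"
  using assms(3-5)
proof (induction "sum m S" arbitrary: m Pz L e rule: less_induct)
  case less
  have deg: "Pz z = 0 \<or> degree (Pz z) < m z" if "z \<in> S" for z
    using degree_lessI[of "Pz z" "m z"] less.prems(1) that by auto
  show ?case
  proof (cases "\<forall>z\<in>S. m z = 0")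
    case True
    then show ?thesis using deg by auto
  next
    case False
    then obtain z1 where z1: "z1 \<in> S" "m z1 > 0" by auto
    have "m z1 \<le> sum m S" using z1 assms(1) by (intro member_le_sum) auto
    hence "L \<ge> 1" using less.prems(2) z1 by linarith
    define m' where "m' = m(z1 := m z1 - 1)"
    have "\<forall>z\<in>S. exp_shift z1 z (Pz z) = 0"
    proof (rule less.hyps[where m = m' and L = "L - 1"])
      show "sum m' S < sum m S" using z1 assms(1) unfolding m'_def by (simp add: sum.remove)
      then show "sum m' S \<le> L - 1" using less.prems(2) by simp
      show "\<forall>z\<in>S. \<forall>n\<ge>m' z. coeff (exp_shift z1 z (Pz z)) n = 0"
      proof (intro ballI allI impI)
        fix z n assume z: "z \<in> S" "m' z \<le> n"
        show "coeff (exp_shift z1 z (Pz z)) n = 0"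
        proof (cases "z = z1")
          case True
          with deg[OF z(1)] z(2) have "degree (Pz z1) \<le> n" unfolding m'_def by auto
          with True show ?thesis by (simp add: coeff_exp_shift_same)
        next
          case False
          with deg[OF z(1)] z(2) show ?thesis unfolding m'_def by (auto intro!: coeff_exp_shift_above)
        qed
      qed
      show "\<forall>t<L - 1. (\<Sum>z\<in>S. poly (exp_shift z1 z (Pz z)) (of_int (e + int t)) * z powi (e + int t)) = 0"
      proof (intro allI impI)
        fix t assume "t < L - 1"
        then show "(\<Sum>z\<in>S. poly (exp_shift z1 z (Pz z)) (of_int (e + int t)) * z powi (e + int t)) = 0"
          using sum_poly_exp_shift[OF assms(2), of z1 Pz "e + int t"]
            less.prems(3)[rule_format, of t] less.prems(3)[rule_format, of "Suc t"] by (simp add: add_ac)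
      qed
    qed
    then show ?thesis
      using exp_shift_vanishing_imp_zero[OF assms(1,2) z1(1)] less.prems(3) \<open>L \<ge> 1\<close> by auto
  qed
qed

definition euler_op :: "'a::idom poly \<Rightarrow> 'a poly" where
  "euler_op p = pCons 0 (pderiv p)"

lemma coeff_euler_op_funpow: "coeff ((euler_op ^^ s) p) n = of_nat n ^ s * coeff p n"
proof (induction s)
  case (Suc s)
  then show ?case by (cases n) (simp_all add: euler_op_def coeff_pderiv)
qed simp

lemma degree_euler_op_funpow: "degree ((euler_op ^^ s) p) \<le> degree p"
  by (rule degree_le) (auto simp: coeff_euler_op_funpow coeff_eq_0)

lemma euler_op_root_power_dvd:
  fixes p :: "'a::{idom, semiring_char_0} poly"
  assumes "[:-z, 1:] ^ Suc s dvd p"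
  shows "[:-z, 1:] ^ s dvd euler_op p"
proof (cases "pderiv p = 0")
  case True
  then show ?thesis unfolding euler_op_def by simp
next
  case False
  hence "p \<noteq> 0" by auto
  hence "Suc s \<le> order z p" using assms order_divides by blast
  hence "order z p = Suc (order z (pderiv p))"
    using order_pderiv[OF \<open>p \<noteq> 0\<close>] order_root \<open>p \<noteq> 0\<close> by (metis Suc_le_D nat.distinct(1))
  hence "[:-z, 1:] ^ s dvd pderiv p" using \<open>Suc s \<le> order z p\<close> order_divides by auto
  moreover have "euler_op p = [:0, 1:] * pderiv p" unfolding euler_op_def by (simp add: mult_pCons_left)
  hence "pderiv p dvd euler_op p" by (metis dvd_triv_right)
  ultimately show ?thesis using dvd_trans by blast
qed

lemma euler_op_funpow_root_power_dvd:
  fixes p :: "'a::{idom, semiring_char_0} poly"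
  assumes "s \<le> order z p"
  shows "[:-z, 1:] ^ (order z p - s) dvd (euler_op ^^ s) p"
  using assms
proof (induction s)
  case (Suc s)
  have "order z p - s = Suc (order z p - Suc s)" using Suc.prems by simp
  hence "[:-z, 1:] ^ Suc (order z p - Suc s) dvd (euler_op ^^ s) p" using Suc by simp
  then show ?case by (simp add: euler_op_root_power_dvd)
qed (simp add: order_1)

lemma poly_eq_sum_coeff:
  fixes p :: "'a::comm_semiring_1 poly"
  assumes "degree p < n"
  shows "poly p z = (\<Sum>j<n. coeff p j * z ^ j)"
proof -
  have "poly p z = (\<Sum>j\<le>degree p. coeff p j * z ^ j)" by (rule Polynomial.poly_altdef)
  also have "\<dots> = (\<Sum>j<n. coeff p j * z ^ j)"
    by (rule sum.mono_neutral_left) (use assms in \<open>auto simp: coeff_eq_0\<close>)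
  finally show ?thesis .
qed

lemma sum_coeff_power_root_eq_0:
  fixes chi :: "'a::field_char_0 poly"
  assumes "degree chi < n" "s < order z chi"
  shows "(\<Sum>j<n. coeff chi j * of_nat j ^ s * z ^ j) = 0"
proof -
  have "(\<Sum>j<n. coeff chi j * of_nat j ^ s * z ^ j) = poly ((euler_op ^^ s) chi) z"
    using poly_eq_sum_coeff[of "(euler_op ^^ s) chi" n z] degree_euler_op_funpow[of s chi] assms(1)
    by (simp add: coeff_euler_op_funpow mult_ac)
  also have "\<dots> = 0"
  proof -
    have "[:-z, 1:] dvd [:-z, 1:] ^ (order z chi - s)" using assms(2) by (intro dvd_power) auto
    also have "\<dots> dvd (euler_op ^^ s) chi"
      by (rule euler_op_funpow_root_power_dvd) (use assms(2) in simp)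
    finally show ?thesis using poly_eq_0_iff_dvd by blast
  qed
  finally show ?thesis .
qed

lemma root_power_solves_recurrence:
  fixes chi :: "'a::field_char_0 poly"
  assumes "degree chi < n" "z \<noteq> 0" "1 \<le> l" "l \<le> order z chi"
  shows "(\<Sum>j<n. coeff chi j * of_int (e + int j) ^ (l - 1) * z powi (e + int j)) = 0"
proof -
  define M where "M = l - 1"
  have "(\<Sum>j<n. coeff chi j * of_int (e + int j) ^ M * z powi (e + int j)) =
     (\<Sum>j<n. coeff chi j * (\<Sum>s\<le>M. of_nat (M choose s) * of_nat j ^ s * of_int e ^ (M - s))
         * (z powi e * z ^ j))"
  proof (intro sum.cong refl)
    fix j
    have a: "(of_int (e + int j) :: 'a) = of_nat j + of_int e" by simp
    have b: "z powi (e + int j) = z powi e * z ^ j" using assms(2) by (simp add: power_int_add)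
    show "coeff chi j * of_int (e + int j) ^ M * z powi (e + int j) =
        coeff chi j * (\<Sum>s\<le>M. of_nat (M choose s) * of_nat j ^ s * of_int e ^ (M - s)) *
        (z powi e * z ^ j)" unfolding a b binomial_ring by simp
  qed
  also have "\<dots> = (\<Sum>s\<le>M. of_nat (M choose s) * of_int e ^ (M - s) * z powi e *
        (\<Sum>j<n. coeff chi j * of_nat j ^ s * z ^ j))"
    by (simp add: sum_distrib_left sum_distrib_right mult_ac sum.swap[of _ "{..<n}"])
  also have "\<dots> = 0"
    using sum_coeff_power_root_eq_0[OF assms(1)] assms(3,4) unfolding M_def by simp
  finally show ?thesis unfolding M_def .
qed

lemma hit_within_nonneg:
  assumes "\<And>i j. 0 \<le> P i j"
  shows "0 \<le> hit_within P M t n i"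
  by (induction n arbitrary: i) (auto intro!: sum_nonneg mult_nonneg_nonneg assms)

lemma hit_within_le_1:
  assumes "\<And>i j. 0 \<le> P i j" and "\<And>i. i \<le> M \<Longrightarrow> i \<noteq> t \<Longrightarrow> (\<Sum>j\<le>M. P i j) = 1"
    and "i \<le> M"
  shows "hit_within P M t n i \<le> 1"
  using assms(3)
proof (induction n arbitrary: i)
  case (Suc n)
  have "(\<Sum>j\<le>M. P i j * hit_within P M t n j) \<le> (\<Sum>j\<le>M. P i j)"
    using Suc.IH assms(1) by (auto intro!: sum_mono mult_left_le)
  then show ?case using assms(2)[OF Suc.prems] by auto
qed simp

lemma hit_within_mono:
  assumes "\<And>i j. 0 \<le> P i j"
  shows "hit_within P M t n i \<le> hit_within P M t (Suc n) i"
proof (induction n arbitrary: i)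
  case 0
  show ?case using hit_within_nonneg[of P M t 1 i, OF assms] by auto
next
  case (Suc n)
  show ?case using Suc assms by (auto intro!: sum_mono mult_left_mono)
qed

lemma hit_within_LIMSEQ:
  assumes "\<And>i j. 0 \<le> P i j" and "\<And>i. i \<le> M \<Longrightarrow> i \<noteq> t \<Longrightarrow> (\<Sum>j\<le>M. P i j) = 1"
    and "i \<le> M"
  shows "(\<lambda>n. hit_within P M t n i) \<longlonglongrightarrow> lim (\<lambda>n. hit_within P M t n i)"
proof -
  have "incseq (\<lambda>n. hit_within P M t n i)" by (rule incseq_SucI) (rule hit_within_mono[OF assms(1)])
  then show ?thesis using incseq_convergent hit_within_le_1[of P, OF assms]
    by (metis convergentI convergent_LIMSEQ_iff)
qed

lemma lim_hit_within_harmonic: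
  assumes "\<And>i j. 0 \<le> P i j" and "\<And>i. i \<le> M \<Longrightarrow> i \<noteq> t \<Longrightarrow> (\<Sum>j\<le>M. P i j) = 1"
    and "i \<le> M" "i \<noteq> t"
  shows "lim (\<lambda>n. hit_within P M t n i) = (\<Sum>j\<le>M. P i j * lim (\<lambda>n. hit_within P M t n j))"
proof -
  have "(\<lambda>n. hit_within P M t (Suc n) i) \<longlonglongrightarrow> (\<Sum>j\<le>M. P i j * lim (\<lambda>n. hit_within P M t n j))"
    using assms(4) hit_within_LIMSEQ[of P, OF assms(1,2)] by (auto intro!: tendsto_sum tendsto_mult_left)
  moreover have "(\<lambda>n. hit_within P M t (Suc n) i) \<longlonglongrightarrow> lim (\<lambda>n. hit_within P M t n i)"
    using LIMSEQ_Suc[OF hit_within_LIMSEQ[of P, OF assms(1-3)]] .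
  ultimately show ?thesis using LIMSEQ_unique by blast
qed

lemma hit_within_absorbing:
  assumes "\<And>j. j \<noteq> a \<Longrightarrow> P a j = 0" "a \<noteq> t"
  shows "hit_within P M t n a = 0"
proof (induction n)
  case (Suc n)
  have "(\<Sum>j\<le>M. P a j * hit_within P M t n j) = 0"
    using Suc assms(1) by (intro sum.neutral) (metis mult_zero_left mult_zero_right)
  then show ?case using assms(2) by simp
qed (use assms(2) in simp)

lemma hit_within_target: "hit_within P M t n t = 1"
  by (cases n) simp_all

text \<open>Maximum principle: a largest index at which h attains a positive maximum would be an interior
  point from which the chain can move further up.\<close>
lemma harmonic_le_0:
  fixes P :: "nat \<Rightarrow> nat \<Rightarrow> real" and h :: "nat \<Rightarrow> real"
  assumes nonneg: "\<And>i j. 0 \<le> P i j"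
    and stoch: "\<And>i. 0 < i \<Longrightarrow> i < N \<Longrightarrow> (\<Sum>j\<le>N. P i j) = 1"
    and up: "\<And>i. 0 < i \<Longrightarrow> i < N \<Longrightarrow> \<exists>j. i < j \<and> j \<le> N \<and> 0 < P i j"
    and boundary: "h 0 \<le> 0" "h N \<le> 0"
    and harm: "\<And>i. 0 < i \<Longrightarrow> i < N \<Longrightarrow> h i = (\<Sum>j\<le>N. P i j * h j)"
    and "i \<le> N"
  shows "h i \<le> 0"
proof (rule ccontr)
  assume "\<not> h i \<le> 0"
  define M where "M = Max (h ` {..N})"
  have le_M: "h j \<le> M" if "j \<le> N" for j unfolding M_def using that by simp
  have "0 < M" using le_M[OF \<open>i \<le> N\<close>] \<open>\<not> h i \<le> 0\<close> by linarith
  define I where "I = {j. j \<le> N \<and> h j = M}"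
  have "M \<in> h ` {..N}" unfolding M_def by (intro Max_in) auto
  hence "I \<noteq> {}" "finite I" unfolding I_def by auto
  hence "Max I \<in> I" and top: "\<And>j. j \<in> I \<Longrightarrow> j \<le> Max I" by auto
  hence "Max I \<le> N" "h (Max I) = M" unfolding I_def by auto
  moreover have "Max I \<noteq> 0" "Max I \<noteq> N"
    using \<open>h (Max I) = M\<close> \<open>0 < M\<close> boundary by (metis not_le)+
  ultimately have interior: "0 < Max I" "Max I < N" by auto
  then obtain j where j: "Max I < j" "j \<le> N" "0 < P (Max I) j" using up by blast
  have "(\<Sum>j\<le>N. P (Max I) j * (M - h j)) = M * (\<Sum>j\<le>N. P (Max I) j) - (\<Sum>j\<le>N. P (Max I) j * h j)"
    by (simp add: algebra_simps sum_subtractf sum_distrib_left)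
  also have "\<dots> = 0" using stoch[OF interior] harm[OF interior] \<open>h (Max I) = M\<close> by simp
  finally have "P (Max I) j * (M - h j) = 0"
    by (rule sum_nonneg_0[rotated 2]) (use j(2) nonneg le_M in auto)
  hence "j \<in> I" using j unfolding I_def by simp
  thus False using top j(1) by fastforce
qed

lemma harmonic_eq_0:
  fixes P :: "nat \<Rightarrow> nat \<Rightarrow> real" and h :: "nat \<Rightarrow> complex"
  assumes nonneg: "\<And>i j. 0 \<le> P i j"
    and stoch: "\<And>i. 0 < i \<Longrightarrow> i < N \<Longrightarrow> (\<Sum>j\<le>N. P i j) = 1"
    and up: "\<And>i. 0 < i \<Longrightarrow> i < N \<Longrightarrow> \<exists>j. i < j \<and> j \<le> N \<and> 0 < P i j"
    and boundary: "h 0 = 0" "h N = 0"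
    and harm: "\<And>i. 0 < i \<Longrightarrow> i < N \<Longrightarrow> h i = (\<Sum>j\<le>N. P i j *\<^sub>R h j)"
    and "i \<le> N"
  shows "h i = 0"
proof -
  have real: "g i = 0" if "g 0 = 0" "g N = 0" "\<And>i. 0 < i \<Longrightarrow> i < N \<Longrightarrow> g i = (\<Sum>j\<le>N. P i j * g j)"
    for g :: "nat \<Rightarrow> real"
  proof -
    have "g i \<le> 0" by (rule harmonic_le_0[OF nonneg stoch up]) (use that assms(7) in auto)
    moreover have "- g i \<le> 0"
      by (rule harmonic_le_0[OF nonneg stoch up, where h = "\<lambda>i. - g i"])
        (use that assms(7) in \<open>auto simp: sum_negf\<close>)
    ultimately show ?thesis by simp
  qed
  have "Re (h i) = 0" by (rule real) (use boundary harm in \<open>auto simp: Re_sum\<close>)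
  moreover have "Im (h i) = 0" by (rule real) (use boundary harm in \<open>auto simp: Im_sum\<close>)
  ultimately show ?thesis by (simp add: complex_eq_iff)
qed

lemma Max_positive_props:
  fixes f :: "nat \<Rightarrow> real"
  assumes "\<forall>j\<in>{1..k}. 0 \<le> f j" and "0 < (\<Sum>j=1..k. f j)"
  shows "1 \<le> Max {j \<in> {1..k}. 0 < f j}" "Max {j \<in> {1..k}. 0 < f j} \<le> k"
    "0 < f (Max {j \<in> {1..k}. 0 < f j})"
    "\<And>j. Max {j \<in> {1..k}. 0 < f j} < j \<Longrightarrow> j \<le> k \<Longrightarrow> f j = 0"
proof -
  let ?S = "{j \<in> {1..k}. 0 < f j}"
  have "?S \<noteq> {}"
  proof
    assume "?S = {}"
    hence "(\<Sum>j=1..k. f j) \<le> 0" by (intro sum_nonpos) auto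
    thus False using assms(2) by simp
  qed
  hence "Max ?S \<in> ?S" by (intro Max_in) auto
  thus "1 \<le> Max ?S" "Max ?S \<le> k" "0 < f (Max ?S)" by auto
  show "f j = 0" if "Max ?S < j" "j \<le> k" for j
  proof (rule ccontr)
    assume "f j \<noteq> 0"
    hence "j \<in> ?S" using assms(1) that \<open>Max ?S \<in> ?S\<close> by (auto simp: order_less_le)
    hence "j \<le> Max ?S" by simp
    thus False using that by simp
  qed
qed

locale random_leap =
  fixes k N :: nat and p q :: "nat \<Rightarrow> real"
  assumes k_ge_1: "k \<ge> 1"
    and p_nonneg: "\<forall>j\<in>{1..k}. p j \<ge> 0" and q_nonneg: "\<forall>j\<in>{1..k}. q j \<ge> 0"
    and sum_pq: "(\<Sum>j=1..k. p j + q j) = 1"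
    and sum_p_pos: "(\<Sum>j=1..k. p j) > 0" and sum_q_pos: "(\<Sum>j=1..k. q j) > 0"
    and N_ge: "N \<ge> kp k p + kq k q"
begin

abbreviation "KP \<equiv> kp k p"
abbreviation "KQ \<equiv> kq k q"
abbreviation "xi \<equiv> xi_prob k p q"
abbreviation "P \<equiv> leap_trans k p q N"
abbreviation "u \<equiv> absorb_prob k p q N"

lemma KP_props: "1 \<le> KP" "KP \<le> k" "0 < p KP" "\<And>j. KP < j \<Longrightarrow> j \<le> k \<Longrightarrow> p j = 0"
  unfolding kp_def by (rule Max_positive_props[OF p_nonneg sum_p_pos])+

lemma KQ_props: "1 \<le> KQ" "KQ \<le> k" "0 < q KQ" "\<And>j. KQ < j \<Longrightarrow> j \<le> k \<Longrightarrow> q j = 0"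
  unfolding kq_def by (rule Max_positive_props[OF q_nonneg sum_q_pos])+

lemma N_ge_2: "N \<ge> 2"
  using N_ge KP_props(1) KQ_props(1) by simp

lemma xi_nonneg: "0 \<le> xi d"
  using p_nonneg q_nonneg unfolding xi_prob_def by (auto simp: nat_le_iff)

lemma xi_of_nat: "j \<in> {1..k} \<Longrightarrow> xi (int j) = p j"
  unfolding xi_prob_def by auto

lemma xi_uminus_of_nat: "j \<in> {1..k} \<Longrightarrow> xi (- int j) = q j"
  unfolding xi_prob_def by auto

lemma xi_outside_range: "d \<notin> {- int k..int k} \<Longrightarrow> xi d = 0"
  unfolding xi_prob_def by auto

lemma xi_outside_support:
  assumes "d < - int KQ \<or> int KP < d \<or> d = 0"
  shows "xi d = 0"
  using assms KP_props(1,2) KP_props(4)[of "nat d"] KQ_props(1,2) KQ_props(4)[of "nat (- d)"]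
  unfolding xi_prob_def by auto

lemma sum_xi_scaleR:
  fixes F :: "int \<Rightarrow> 'a::real_vector"
  shows "(\<Sum>d\<in>{- int k..int k}. xi d *\<^sub>R F d) =
    (\<Sum>j=1..k. p j *\<^sub>R F (int j)) + (\<Sum>j=1..k. q j *\<^sub>R F (- int j))"
proof -
  let ?pos = "int ` {1..k}" and ?neg = "(\<lambda>j. - int j) ` {1..k}"
  have "{- int k..int k} = ?pos \<union> (?neg \<union> {0})"
  proof (intro equalityI subsetI)
    fix x assume x: "x \<in> {- int k..int k}"
    consider "0 < x" | "x < 0" | "x = 0" by linarith
    then show "x \<in> ?pos \<union> (?neg \<union> {0})"
    proof cases
      case 1
      hence "x = int (nat x)" "nat x \<in> {1..k}" using x by auto
      then show ?thesis by blast
    next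
      case 2
      hence "x = - int (nat (- x))" "nat (- x) \<in> {1..k}" using x by auto
      then show ?thesis by blast
    qed simp
  qed auto
  hence "(\<Sum>d\<in>{- int k..int k}. xi d *\<^sub>R F d) =
     (\<Sum>d\<in>?pos. xi d *\<^sub>R F d) + ((\<Sum>d\<in>?neg. xi d *\<^sub>R F d) + (\<Sum>d\<in>{0}. xi d *\<^sub>R F d))"
    by (simp only:) (subst sum.union_disjoint; (subst sum.union_disjoint)?; auto)
  also have "(\<Sum>d\<in>?pos. xi d *\<^sub>R F d) = (\<Sum>j=1..k. p j *\<^sub>R F (int j))"
    by (subst sum.reindex) (auto intro!: sum.cong simp: xi_of_nat)
  also have "(\<Sum>d\<in>?neg. xi d *\<^sub>R F d) = (\<Sum>j=1..k. q j *\<^sub>R F (- int j))"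
    by (subst sum.reindex) (auto intro!: sum.cong simp: xi_uminus_of_nat inj_on_def)
  finally show ?thesis by (simp add: xi_prob_def)
qed

lemma sum_xi: "(\<Sum>d\<in>{- int k..int k}. xi d) = 1"
  using sum_xi_scaleR[of "\<lambda>_. 1::real"] sum_pq by (simp add: sum.distrib)

definition clip :: "int \<Rightarrow> nat" where
  "clip x = nat (min (int N) x)"

lemma leap_trans_sum:
  fixes f :: "nat \<Rightarrow> 'a::real_vector"
  assumes i: "0 < i" "i < N"
  shows "(\<Sum>j\<le>N. P i j *\<^sub>R f j) = (\<Sum>d\<in>{- int k..int k}. xi d *\<^sub>R f (clip (int i + d)))"
proof -
  let ?g = "\<lambda>d. xi d *\<^sub>R f (clip (int i + d))"
  define A where "A = {- int k..- int i}"
  define B where "B = {- int k..int k} \<inter> {- int i<..<int N - int i}"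
  define C where "C = {int N - int i..int k}"
  have "{- int k..int k} = A \<union> (B \<union> C)" unfolding A_def B_def C_def using i by auto
  hence RHS: "(\<Sum>d\<in>{- int k..int k}. ?g d) = sum ?g A + (sum ?g B + sum ?g C)"
    using i by (simp only:) (subst sum.union_disjoint; (subst sum.union_disjoint)?; auto simp: A_def B_def C_def)
  have "{..N} = {0} \<union> ({1..<N} \<union> {N})" using i by auto
  hence LHS: "(\<Sum>j\<le>N. P i j *\<^sub>R f j) = P i 0 *\<^sub>R f 0 + ((\<Sum>j\<in>{1..<N}. P i j *\<^sub>R f j) + P i N *\<^sub>R f N)"
    using i by (simp add: sum.union_disjoint)
  have "sum ?g A = (\<Sum>d\<in>A. xi d) *\<^sub>R f 0"
    unfolding scaleR_sum_left by (intro sum.cong refl) (auto simp: A_def clip_def)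
  also have "(\<Sum>d\<in>A. xi d) = P i 0" unfolding A_def leap_trans_def using i by simp
  finally have a: "sum ?g A = P i 0 *\<^sub>R f 0" .
  have "sum ?g C = (\<Sum>d\<in>C. xi d) *\<^sub>R f N"
    unfolding scaleR_sum_left by (intro sum.cong refl) (auto simp: C_def clip_def)
  also have "(\<Sum>d\<in>C. xi d) = P i N" unfolding C_def leap_trans_def using i by simp
  finally have c: "sum ?g C = P i N *\<^sub>R f N" .
  have "(\<Sum>j\<in>{1..<N}. P i j *\<^sub>R f j) = (\<Sum>j\<in>{1..<N}. xi (int j - int i) *\<^sub>R f j)"
    by (intro sum.cong refl) (use i in \<open>auto simp: leap_trans_def\<close>)
  also have "\<dots> = (\<Sum>d\<in>(\<lambda>j. int j - int i) ` {1..<N}. ?g d)"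
    by (subst sum.reindex) (auto simp: inj_on_def clip_def intro!: sum.cong)
  also have "(\<lambda>j. int j - int i) ` {1..<N} = {- int i<..<int N - int i}"
  proof (intro equalityI subsetI)
    fix x assume "x \<in> {- int i<..<int N - int i}"
    hence "x = int (nat (int i + x)) - int i" "nat (int i + x) \<in> {1..<N}" by auto
    thus "x \<in> (\<lambda>j. int j - int i) ` {1..<N}" by blast
  qed auto
  also have "(\<Sum>d\<in>{- int i<..<int N - int i}. ?g d) = sum ?g B"
    unfolding B_def by (rule sum.mono_neutral_right) (use xi_outside_range in force)+
  finally have b: "sum ?g B = (\<Sum>j\<in>{1..<N}. P i j *\<^sub>R f j)" by simp
  show ?thesis unfolding LHS RHS a b c ..
qed

lemma leap_trans_nonneg: "0 \<le> P i j"
  unfolding leap_trans_def using xi_nonneg by (auto intro: sum_nonneg)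

lemma leap_trans_row_sum:
  assumes "i \<le> N" "0 < i \<longrightarrow> i < N"
  shows "(\<Sum>j\<le>N. P i j) = 1"
proof (cases "i = 0")
  case True
  then show ?thesis by (simp add: leap_trans_def)
next
  case False
  hence "0 < i" "i < N" using assms by auto
  hence "(\<Sum>j\<le>N. P i j *\<^sub>R (1::real)) = (\<Sum>d\<in>{- int k..int k}. xi d *\<^sub>R 1)"
    by (rule leap_trans_sum)
  then show ?thesis using sum_xi by simp
qed

lemma leap_trans_up:
  assumes "0 < i" "i < N"
  shows "\<exists>j. i < j \<and> j \<le> N \<and> 0 < P i j"
proof (cases "i + KP < N")
  case True
  then have "P i (i + KP) = p KP" using assms KP_props(1,2) by (simp add: leap_trans_def xi_of_nat)
  then show ?thesis using True KP_props(1,3) by (intro exI[of _ "i + KP"]) simp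
next
  case False
  have "p KP = xi (int KP)" using KP_props(1,2) by (simp add: xi_of_nat)
  also have "\<dots> \<le> (\<Sum>d\<in>{int N - int i..int k}. xi d)"
    by (rule member_le_sum) (use False KP_props(2) xi_nonneg in auto)
  also have "\<dots> = P i N" using assms by (simp add: leap_trans_def)
  finally show ?thesis using assms KP_props(3) by (intro exI[of _ N]) simp
qed

lemma leap_harmonic_eq_0:
  fixes h :: "nat \<Rightarrow> complex"
  assumes "h 0 = 0" "h N = 0" "\<And>i. 0 < i \<Longrightarrow> i < N \<Longrightarrow> h i = (\<Sum>j\<le>N. P i j *\<^sub>R h j)" "i \<le> N"
  shows "h i = 0"
  by (rule harmonic_eq_0[of P]) (use assms leap_trans_nonneg leap_trans_row_sum leap_trans_up in auto)

lemma absorb_prob_harmonic: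
  assumes "0 < i" "i < N"
  shows "u i = (\<Sum>j\<le>N. P i j * u j)"
  unfolding absorb_prob_def
  by (rule lim_hit_within_harmonic) (use assms leap_trans_nonneg leap_trans_row_sum in auto)

lemma absorb_prob_0: "u 0 = 0"
  unfolding absorb_prob_def
  using hit_within_absorbing[where P = P and a = 0 and t = N] N_ge_2 by (simp add: leap_trans_def limI)

lemma absorb_prob_N: "u N = 1"
  unfolding absorb_prob_def by (simp add: hit_within_target)

end

lemma sum_char_coeff_lower:
  fixes w :: "int \<Rightarrow> complex"
  shows "(\<Sum>j<k. of_real (char_coeff k p q j) * w (x - int k + 1 + int j)) =
    - (\<Sum>j=1..k. of_real (q j) * (\<Sum>t<j. w (x - int t)))"
proof -
  let ?g = "\<lambda>j. of_real (char_coeff k p q j) * w (x - int k + 1 + int j)"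
  have "(\<Sum>j<k. ?g j) = (\<Sum>t<k. ?g (k - Suc t))" by (rule sum.nat_diff_reindex[symmetric])
  also have "\<dots> = (\<Sum>t<k. - (\<Sum>j\<in>{Suc t..k}. of_real (q j) * w (x - int t)))"
  proof (intro sum.cong refl)
    fix t assume t: "t \<in> {..<k}"
    have c: "char_coeff k p q (k - Suc t) = - (\<Sum>l\<in>{Suc t..k}. q l)"
      unfolding char_coeff_def using t by (auto intro!: sum.cong)
    have e: "x - int k + 1 + int (k - Suc t) = x - int t" using t by auto
    show "?g (k - Suc t) = - (\<Sum>j\<in>{Suc t..k}. of_real (q j) * w (x - int t))"
      unfolding c e by (simp add: sum_distrib_right)
  qed
  also have "\<dots> = - (\<Sum>t<k. \<Sum>j\<in>{Suc t..k}. of_real (q j) * w (x - int t))"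
    by (simp add: sum_negf)
  also have "(\<Sum>t<k. \<Sum>j\<in>{Suc t..k}. of_real (q j) * w (x - int t)) =
      (\<Sum>j=1..k. of_real (q j) * (\<Sum>t<j. w (x - int t)))"
    using sum.nested_swap'[of "\<lambda>j t. of_real (q j) * w (x - int t)" k]
    by (simp add: sum.atLeast1_atMost_eq sum.atMost_shift sum_distrib_left)
  finally show ?thesis .
qed

lemma sum_char_coeff_upper:
  fixes w :: "int \<Rightarrow> complex"
  assumes "k \<ge> 1"
  shows "(\<Sum>j\<in>{k..<2*k}. of_real (char_coeff k p q j) * w (x - int k + 1 + int j)) =
    (\<Sum>j=1..k. of_real (p j) * (\<Sum>t=1..j. w (x + int t)))"
proof -
  let ?g = "\<lambda>j. of_real (char_coeff k p q j) * w (x - int k + 1 + int j)"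
  have "(\<Sum>j\<in>{k..<2*k}. ?g j) = (\<Sum>t\<in>{1..k}. ?g (k - 1 + t))"
    by (rule sum.reindex_bij_witness[of _ "\<lambda>t. k - 1 + t" "\<lambda>j. j + 1 - k"]) (use assms in auto)
  also have "\<dots> = (\<Sum>t\<in>{1..k}. \<Sum>j\<in>{t..k}. of_real (p j) * w (x + int t))"
  proof (intro sum.cong refl)
    fix t assume t: "t \<in> {1..k}"
    have c: "char_coeff k p q (k - 1 + t) = (\<Sum>l\<in>{t..k}. p l)"
      unfolding char_coeff_def using t by (auto intro!: sum.cong)
    have e: "x - int k + 1 + int (k - 1 + t) = x + int t" using t by auto
    show "?g (k - 1 + t) = (\<Sum>j\<in>{t..k}. of_real (p j) * w (x + int t))"
      unfolding c e by (simp add: sum_distrib_right)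
  qed
  also have "\<dots> = (\<Sum>j=1..k. of_real (p j) * (\<Sum>t=1..j. w (x + int t)))"
    using sum.nested_swap'[of "\<lambda>j t. of_real (p j) * w (x + int (Suc t))" k]
    by (simp add: sum.atLeast1_atMost_eq sum.atMost_shift sum_distrib_left)
  finally show ?thesis .
qed

lemma sum_char_coeff:
  fixes w :: "int \<Rightarrow> complex"
  assumes "k \<ge> 1"
  shows "(\<Sum>j<2*k. of_real (char_coeff k p q j) * w (x - int k + 1 + int j)) =
    (\<Sum>j=1..k. of_real (p j) * (\<Sum>t=1..j. w (x + int t))) - (\<Sum>j=1..k. of_real (q j) * (\<Sum>t<j. w (x - int t)))"
proof -
  let ?g = "\<lambda>j. of_real (char_coeff k p q j) * w (x - int k + 1 + int j)"
  have halves: "{..<2*k} = {..<k} \<union> {k..<2*k}" by auto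
  have "(\<Sum>j<2*k. ?g j) = (\<Sum>j<k. ?g j) + (\<Sum>j\<in>{k..<2*k}. ?g j)"
    unfolding halves by (rule sum.union_disjoint) auto
  then show ?thesis
    using sum_char_coeff_lower[of k p q w x] sum_char_coeff_upper[OF assms, of p q w x] by simp
qed

lemma sum_int_interval_add:
  fixes w :: "int \<Rightarrow> 'a::comm_monoid_add"
  assumes "a \<le> x + 1"
  shows "(\<Sum>e\<in>{a..x + int j}. w e) = (\<Sum>e\<in>{a..x}. w e) + (\<Sum>t=1..j. w (x + int t))"
proof (induction j)
  case (Suc j)
  have "{a..x + int (Suc j)} = insert (x + int (Suc j)) {a..x + int j}" using assms by auto
  then show ?case using Suc by (simp add: add_ac)
qed simp

lemma sum_int_interval_diff:
  fixes w :: "int \<Rightarrow> 'a::ab_group_add"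
  assumes "a \<le> x - int j + 1"
  shows "(\<Sum>e\<in>{a..x - int j}. w e) = (\<Sum>e\<in>{a..x}. w e) - (\<Sum>t<j. w (x - int t))"
proof -
  have "(\<Sum>e\<in>{a..(x - int j) + int j}. w e) = (\<Sum>e\<in>{a..x - int j}. w e) + (\<Sum>t=1..j. w (x - int j + int t))"
    by (rule sum_int_interval_add) (use assms in simp)
  moreover have "(\<Sum>t=1..j. w (x - int j + int t)) = (\<Sum>t<j. w (x - int t))"
    by (rule sum.reindex_bij_witness[of _ "\<lambda>t. j - t" "\<lambda>t. j - t"]) (auto simp: of_nat_diff algebra_simps)
  ultimately show ?thesis by (simp add: algebra_simps)
qed

context random_leap
begin

abbreviation "cc \<equiv> char_coeff k p q"

lemma sum_xi_partial_sums:
  fixes w :: "int \<Rightarrow> complex"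
  assumes "a \<le> x - int KQ + 1"
  shows "(\<Sum>d\<in>{- int k..int k}. xi d *\<^sub>R (\<Sum>e\<in>{a..x + d}. w e)) =
    (\<Sum>e\<in>{a..x}. w e) + (\<Sum>j<2*k. of_real (cc j) * w (x - int k + 1 + int j))"
proof -
  let ?V = "\<lambda>y. \<Sum>e\<in>{a..y}. w e"
  have up: "p j *\<^sub>R ?V (x + int j) = p j *\<^sub>R ?V x + of_real (p j) * (\<Sum>t=1..j. w (x + int t))" for j
    using sum_int_interval_add[of a x w j] assms KQ_props(1)
    by (simp add: scaleR_conv_of_real algebra_simps)
  have down: "q j *\<^sub>R ?V (x + - int j) = q j *\<^sub>R ?V x - of_real (q j) * (\<Sum>t<j. w (x - int t))"
    if "j \<in> {1..k}" for j
  proof (cases "j \<le> KQ")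
    case True
    then have "?V (x + - int j) = ?V x - (\<Sum>t<j. w (x - int t))"
      using sum_int_interval_diff[of a x j w] assms by simp
    then show ?thesis by (simp only: scaleR_conv_of_real right_diff_distrib)
  qed (use KQ_props(4) that in auto)
  have "(\<Sum>j=1..k. p j *\<^sub>R ?V (x + int j)) =
      (\<Sum>j=1..k. p j *\<^sub>R ?V x) + (\<Sum>j=1..k. of_real (p j) * (\<Sum>t=1..j. w (x + int t)))"
    unfolding up by (rule sum.distrib)
  moreover have "(\<Sum>j=1..k. q j *\<^sub>R ?V (x + - int j)) =
      (\<Sum>j=1..k. q j *\<^sub>R ?V x) - (\<Sum>j=1..k. of_real (q j) * (\<Sum>t<j. w (x - int t)))"
    unfolding sum_subtractf[symmetric] by (rule sum.cong[OF refl down])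
  moreover have "(\<Sum>j=1..k. p j *\<^sub>R ?V x) + (\<Sum>j=1..k. q j *\<^sub>R ?V x) = ?V x"
    using sum_pq by (simp add: scaleR_sum_left[symmetric] scaleR_add_left[symmetric] sum.distrib[symmetric])
  ultimately have "(\<Sum>d\<in>{- int k..int k}. xi d *\<^sub>R ?V (x + d)) = ?V x +
     ((\<Sum>j=1..k. of_real (p j) * (\<Sum>t=1..j. w (x + int t))) -
      (\<Sum>j=1..k. of_real (q j) * (\<Sum>t<j. w (x - int t))))"
    unfolding sum_xi_scaleR by (simp add: algebra_simps)
  then show ?thesis using sum_char_coeff[OF k_ge_1, of p q w x] by simp
qed

lemma partial_sum_clip:
  fixes w :: "int \<Rightarrow> 'a::comm_monoid_add"
  assumes low: "\<And>e. 2 - int KQ \<le> e \<Longrightarrow> e \<le> 0 \<Longrightarrow> w e = 0"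
    and high: "\<And>e. int N + 1 \<le> e \<Longrightarrow> e \<le> int N + int KP - 1 \<Longrightarrow> w e = 0"
    and "x \<le> int N + int KP - 1"
  shows "(\<Sum>e\<in>{2 - int KQ..x}. w e) = (\<Sum>e\<in>{1..int (clip x)}. w e)"
proof -
  have low_sum: "(\<Sum>e\<in>{2 - int KQ..y}. w e) = 0" if "y \<le> 0" for y
    using low that by (intro sum.neutral) auto
  have from_1: "(\<Sum>e\<in>{2 - int KQ..y}. w e) = (\<Sum>e\<in>{1..y}. w e)" if "0 \<le> y" for y
  proof -
    have split: "{2 - int KQ..y} = {2 - int KQ..0} \<union> {1..y}" using that KQ_props(1) by auto
    have "(\<Sum>e\<in>{2 - int KQ..y}. w e) = (\<Sum>e\<in>{2 - int KQ..0}. w e) + (\<Sum>e\<in>{1..y}. w e)"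
      unfolding split by (rule sum.union_disjoint) auto
    then show ?thesis using low_sum[of 0] by simp
  qed
  consider "x \<le> 0" | "0 < x" "x \<le> int N" | "int N < x" by linarith
  then show ?thesis
  proof cases
    case 1
    then have "clip x = 0" by (simp add: clip_def)
    then show ?thesis using low_sum[OF 1] by simp
  next
    case 2
    then have "int (clip x) = x" by (simp add: clip_def)
    then show ?thesis using from_1[of x] 2 by simp
  next
    case 3
    then have "int (clip x) = int N" by (simp add: clip_def)
    have split: "{1..x} = {1..int N} \<union> {int N + 1..x}" using 3 by auto
    have "(\<Sum>e\<in>{1..x}. w e) = (\<Sum>e\<in>{1..int N}. w e) + (\<Sum>e\<in>{int N + 1..x}. w e)"
      unfolding split by (rule sum.union_disjoint) auto
    moreover have "(\<Sum>e\<in>{int N + 1..x}. w e) = 0" using high assms(3) by (intro sum.neutral) auto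
    ultimately show ?thesis using from_1[of x] 3 \<open>int (clip x) = int N\<close> by simp
  qed
qed

lemma partial_sums_harmonic:
  fixes w :: "int \<Rightarrow> complex"
  assumes rec: "(\<Sum>j<2*k. of_real (cc j) * w (int i - int k + 1 + int j)) = 0"
    and low: "\<And>e. 2 - int KQ \<le> e \<Longrightarrow> e \<le> 0 \<Longrightarrow> w e = 0"
    and high: "\<And>e. int N + 1 \<le> e \<Longrightarrow> e \<le> int N + int KP - 1 \<Longrightarrow> w e = 0"
    and i: "0 < i" "i < N"
  shows "(\<Sum>e\<in>{1..int i}. w e) = (\<Sum>j\<le>N. P i j *\<^sub>R (\<Sum>e\<in>{1..int j}. w e))"
proof -
  let ?V = "\<lambda>y. \<Sum>e\<in>{2 - int KQ..y}. w e"
  have i_le: "int i \<le> int N + int KP - 1" using i by simp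
  have "(\<Sum>j\<le>N. P i j *\<^sub>R (\<Sum>e\<in>{1..int j}. w e)) =
      (\<Sum>d\<in>{- int k..int k}. xi d *\<^sub>R (\<Sum>e\<in>{1..int (clip (int i + d))}. w e))"
    by (rule leap_trans_sum[OF i])
  also have "\<dots> = (\<Sum>d\<in>{- int k..int k}. xi d *\<^sub>R ?V (int i + d))"
  proof (intro sum.cong refl)
    fix d
    show "xi d *\<^sub>R (\<Sum>e\<in>{1..int (clip (int i + d))}. w e) = xi d *\<^sub>R ?V (int i + d)"
    proof (cases "xi d = 0")
      case False
      hence "d \<le> int KP" by (rule contrapos_np) (simp add: xi_outside_support)
      hence "int i + d \<le> int N + int KP - 1" using i by linarith
      then show ?thesis using partial_sum_clip[of w, OF low high] by simp
    qed simp
  qed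
  also have "\<dots> = ?V (int i)"
    using sum_xi_partial_sums[of "2 - int KQ" "int i" w] rec i by simp
  also have "\<dots> = (\<Sum>e\<in>{1..int (clip (int i))}. w e)"
    by (rule partial_sum_clip[of w, OF low high i_le])
  also have "clip (int i) = i" using i by (simp add: clip_def)
  finally show ?thesis ..
qed

abbreviation "chi \<equiv> char_poly k p q"
abbreviation "R \<equiv> KP + KQ - 1"

lemma coeff_char_poly: "coeff chi j = (if j < 2 * k then of_real (cc j) else 0)"
  unfolding char_poly_def by (auto simp: nth_default_def)

lemma char_coeff_below: "j < k - KQ \<Longrightarrow> cc j = 0"
  unfolding char_coeff_def using KQ_props by (auto intro!: sum.neutral)

lemma char_coeff_lowest: "cc (k - KQ) = - q KQ"
proof -
  have "cc (k - KQ) = - (\<Sum>l\<in>{KQ..k}. q l)" unfolding char_coeff_def using KQ_props by auto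
  also have "(\<Sum>l\<in>{KQ..k}. q l) = q KQ + (\<Sum>l\<in>{Suc KQ..k}. q l)"
    using KQ_props(2) by (simp add: sum.atLeast_Suc_atMost)
  also have "(\<Sum>l\<in>{Suc KQ..k}. q l) = 0" using KQ_props(4) by (intro sum.neutral) auto
  finally show ?thesis by simp
qed

lemma char_coeff_above:
  assumes "k + KP - 1 < j"
  shows "cc j = 0"
proof -
  have "\<not> j \<le> k - 1" using assms KP_props(1) by auto
  hence "cc j = (\<Sum>l\<in>{j - k + 1..k}. p l)" unfolding char_coeff_def by auto
  also have "\<dots> = 0" using KP_props(4) assms by (intro sum.neutral) auto
  finally show ?thesis .
qed

lemma char_coeff_highest: "cc (k + KP - 1) = p KP"
proof -
  have "\<not> k + KP - 1 \<le> k - 1" using KP_props(1) k_ge_1 by auto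
  hence "cc (k + KP - 1) = (\<Sum>l\<in>{KP..k}. p l)" unfolding char_coeff_def using KP_props(1) by auto
  also have "(\<Sum>l\<in>{KP..k}. p l) = p KP + (\<Sum>l\<in>{Suc KP..k}. p l)"
    using KP_props(2) by (simp add: sum.atLeast_Suc_atMost)
  also have "(\<Sum>l\<in>{Suc KP..k}. p l) = 0" using KP_props(4) by (intro sum.neutral) auto
  finally show ?thesis by simp
qed

lemma char_poly_nonzero: "chi \<noteq> 0"
proof
  assume "chi = 0"
  hence "coeff chi (k + KP - 1) = 0" by simp
  moreover have "k + KP - 1 < 2 * k" using KP_props(2) k_ge_1 by simp
  ultimately show False using coeff_char_poly char_coeff_highest KP_props(3) by simp
qed

lemma degree_char_poly_less: "degree chi < 2 * k"
  using degree_lessI[of chi "2 * k"] char_poly_nonzero coeff_char_poly by simp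

definition reduced_char_poly :: "complex poly" where
  "reduced_char_poly = Poly (map (\<lambda>j. of_real (cc (j + (k - KQ)))) [0..<R + 1])"

lemma coeff_reduced_char_poly:
  "coeff reduced_char_poly n = (if n \<le> R then of_real (cc (n + (k - KQ))) else 0)"
  unfolding reduced_char_poly_def by (auto simp: nth_default_def simp del: upt_Suc)

lemma char_poly_eq_monom_mult: "chi = monom 1 (k - KQ) * reduced_char_poly"
proof (rule poly_eqI)
  fix n
  consider "n < k - KQ" | "k - KQ \<le> n" "n \<le> k + KP - 1" | "k + KP - 1 < n" by linarith
  then show "coeff chi n = coeff (monom 1 (k - KQ) * reduced_char_poly) n"
  proof cases
    case 1
    then show ?thesis unfolding coeff_monom_mult coeff_char_poly using char_coeff_below by auto
  next
    case 2
    hence "n < 2 * k" "n - (k - KQ) \<le> R" using KP_props KQ_props by linarith+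
    then show ?thesis unfolding coeff_monom_mult coeff_char_poly coeff_reduced_char_poly using 2 by simp
  next
    case 3
    hence "\<not> n - (k - KQ) \<le> R" using KP_props KQ_props by linarith
    then show ?thesis
      unfolding coeff_monom_mult coeff_char_poly coeff_reduced_char_poly using 3 char_coeff_above by simp
  qed
qed

lemma degree_reduced_char_poly: "degree reduced_char_poly = R"
proof (rule antisym)
  show "degree reduced_char_poly \<le> R" by (rule degree_le) (auto simp: coeff_reduced_char_poly)
  have "R + (k - KQ) = k + KP - 1" using KP_props KQ_props by simp
  hence "coeff reduced_char_poly R \<noteq> 0"
    unfolding coeff_reduced_char_poly using char_coeff_highest KP_props(3) by simp
  thus "R \<le> degree reduced_char_poly" by (rule le_degree)
qed

lemma poly_reduced_char_poly_0: "poly reduced_char_poly 0 \<noteq> 0"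
  using char_coeff_lowest KQ_props(3) by (simp add: poly_0_coeff_0 coeff_reduced_char_poly)

lemma order_char_poly: "z \<noteq> 0 \<Longrightarrow> order z chi = order z reduced_char_poly"
  using char_poly_nonzero order_mult[of "monom 1 (k - KQ)" reduced_char_poly z]
  by (simp add: char_poly_eq_monom_mult order_0I poly_monom)

lemma sum_order_nonzero_roots:
  assumes "set zs = {z. z \<noteq> 0 \<and> poly chi z = 0}"
  shows "(\<Sum>z\<in>set zs. order z chi) = R"
proof -
  have g_nz: "reduced_char_poly \<noteq> 0" using degree_reduced_char_poly poly_reduced_char_poly_0 by auto
  have roots: "set zs = set_mset (proots reduced_char_poly)"
    using assms poly_reduced_char_poly_0 g_nz
    by (auto simp: char_poly_eq_monom_mult poly_monom)
  have "(\<Sum>z\<in>set zs. order z chi) = (\<Sum>z\<in>set zs. count (proots reduced_char_poly) z)"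
    using assms g_nz by (intro sum.cong refl) (simp add: order_char_poly)
  also have "\<dots> = (\<Sum>z\<in>set_mset (proots reduced_char_poly). count (proots reduced_char_poly) z)"
    unfolding roots ..
  also have "\<dots> = size (proots reduced_char_poly)" by (rule size_multiset_overloaded_eq[symmetric])
  also have "\<dots> = R" using size_proots_complex degree_reduced_char_poly by simp
  finally show ?thesis .
qed

end

lemma distinct_concat_map_Pair:
  "distinct zs \<Longrightarrow> (\<And>z. distinct (f z)) \<Longrightarrow> distinct (concat (map (\<lambda>z. map (\<lambda>l. (z, l)) (f z)) zs))"
  by (induction zs) (auto simp: distinct_map inj_on_def)

lemma cofactor_eq_if_other_rows_eq:
  assumes "M1 \<in> carrier_mat n n" "M2 \<in> carrier_mat n n"
    and "\<And>r c. r < n \<Longrightarrow> r \<noteq> a \<Longrightarrow> c < n \<Longrightarrow> M1 $$ (r, c) = M2 $$ (r, c)"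
  shows "cofactor M1 a c = cofactor M2 a c"
proof -
  have "mat_delete M1 a c = mat_delete M2 a c"
    unfolding mat_delete_def using assms by (intro eq_matI) auto
  then show ?thesis unfolding cofactor_def by simp
qed

lemma cramer_rule_unit_vec:
  fixes M :: "'a::field mat"
  assumes M: "M \<in> carrier_mat n n" and "det M \<noteq> 0" "a < n" "r < n"
  shows "(M *\<^sub>v vec n (\<lambda>c. cofactor M a c / det M)) $ r = (if r = a then 1 else 0)"
proof -
  have "(M *\<^sub>v vec n (\<lambda>c. cofactor M a c / det M)) $ r = (\<Sum>c<n. M $$ (r, c) * (cofactor M a c / det M))"
    using M assms(4) by (auto simp: scalar_prod_def atLeast0LessThan intro!: sum.cong)
  also have "\<dots> = (M * adj_mat M) $$ (r, a) / det M"
    using M assms(3,4) adj_mat(1)[OF M]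
    by (auto simp: scalar_prod_def atLeast0LessThan sum_divide_distrib adj_mat_def intro!: sum.cong)
  also have "\<dots> = (if r = a then 1 else 0)"
    unfolding adj_mat(2)[OF M] using assms by simp
  finally show ?thesis .
qed

lemma cramer_rule_other_matrix:
  fixes M M' :: "'a::field mat"
  assumes M: "M \<in> carrier_mat n n" and M': "M' \<in> carrier_mat n n" and a: "a < n"
    and rows: "\<And>r c. r < n \<Longrightarrow> r \<noteq> a \<Longrightarrow> c < n \<Longrightarrow> M' $$ (r, c) = M $$ (r, c)"
  shows "(M' *\<^sub>v vec n (\<lambda>c. cofactor M a c / det M)) $ a = det M' / det M"
proof -
  have "(M' *\<^sub>v vec n (\<lambda>c. cofactor M a c / det M)) $ a = (\<Sum>c<n. M' $$ (a, c) * cofactor M' a c) / det M"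
    using M' a cofactor_eq_if_other_rows_eq[OF M' M rows]
    by (auto simp: scalar_prod_def atLeast0LessThan sum_divide_distrib intro!: sum.cong)
  also have "(\<Sum>c<n. M' $$ (a, c) * cofactor M' a c) = det M'"
    by (rule laplace_expansion_row[OF M' a, symmetric])
  finally show ?thesis .
qed

definition Z_entry :: "complex \<times> nat \<Rightarrow> int \<Rightarrow> complex" where
  "Z_entry c e = of_int e ^ (snd c - 1) * fst c powi e"

locale random_leap_roots = random_leap +
  fixes zs :: "complex list"
  assumes distinct_zs: "distinct zs"
    and set_zs: "set zs = {z. z \<noteq> 0 \<and> poly (char_poly k p q) z = 0}"
begin

abbreviation "Zcols \<equiv> Z_cols chi zs"
abbreviation "Z \<equiv> Z_mat KQ R N chi zs"
abbreviation "A i \<equiv> accordion KQ KP N i"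

definition Z_comb :: "complex vec \<Rightarrow> int \<Rightarrow> complex" where
  "Z_comb \<beta> e = (\<Sum>c<length Zcols. \<beta> $ c * Z_entry (Zcols ! c) e)"

lemma set_Z_cols: "set Zcols = Sigma (set zs) (\<lambda>z. {1..order z chi})"
  unfolding Z_cols_def by (auto simp del: upt_Suc)

lemma distinct_Z_cols: "distinct Zcols"
  unfolding Z_cols_def by (rule distinct_concat_map_Pair[OF distinct_zs]) simp

lemma length_Z_cols: "length Zcols = R"
proof -
  have "length Zcols = sum_list (map (\<lambda>z. order z chi) zs)"
    unfolding Z_cols_def length_concat by (simp add: comp_def del: upt_Suc)
  also have "\<dots> = (\<Sum>z\<in>set zs. order z chi)" by (rule sum_list_distinct_conv_sum_set[OF distinct_zs])
  also have "\<dots> = R" by (rule sum_order_nonzero_roots[OF set_zs])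
  finally show ?thesis .
qed

lemma Z_carrier: "Z \<in> carrier_mat (N + R - 1) R"
  unfolding Z_mat_def by (simp add: length_Z_cols)

lemma accordion_carrier: "A i \<in> carrier_mat R (N + R - 1)"
  unfolding accordion_def by simp

lemma accordion_Z_carrier: "A i * Z \<in> carrier_mat R R"
  by (rule mult_carrier_mat[OF accordion_carrier Z_carrier])

text \<open>Row i0 of Z (counted from 0) belongs to the site e = i0 + 2 - kq, so Z covers the sites
  2 - kq, ..., N + kp - 1.\<close>
lemma Z_mult_vec:
  assumes "\<beta> \<in> carrier_vec R" "i0 < N + R - 1"
  shows "(Z *\<^sub>v \<beta>) $ i0 = Z_comb \<beta> (int i0 + 2 - int KQ)"
proof -
  have "(Z *\<^sub>v \<beta>) $ i0 = (\<Sum>c<R. Z $$ (i0, c) * \<beta> $ c)"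
    using assms Z_carrier by (auto simp: scalar_prod_def atLeast0LessThan intro!: sum.cong)
  also have "\<dots> = Z_comb \<beta> (int i0 + 2 - int KQ)"
    unfolding Z_comb_def length_Z_cols using assms(2)
    by (intro sum.cong refl) (auto simp: Z_mat_def Z_entry_def length_Z_cols Let_def algebra_simps split: prod.splits)
  finally show ?thesis .
qed

lemma Z_comb_recurrence: "(\<Sum>j<2*k. of_real (cc j) * Z_comb \<beta> (x - int k + 1 + int j)) = 0"
proof -
  have "(\<Sum>j<2*k. of_real (cc j) * Z_comb \<beta> (x - int k + 1 + int j)) =
     (\<Sum>c<length Zcols. \<beta> $ c * (\<Sum>j<2*k. coeff chi j * Z_entry (Zcols ! c) (x - int k + 1 + int j)))"
    unfolding Z_comb_def sum_distrib_left
    by (subst sum.swap) (auto intro!: sum.cong simp: coeff_char_poly mult_ac)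
  also have "\<dots> = 0"
  proof (intro sum.neutral ballI)
    fix c assume "c \<in> {..<length Zcols}"
    then obtain z l where zl: "Zcols ! c = (z, l)" "z \<in> set zs" "1 \<le> l" "l \<le> order z chi"
      using set_Z_cols by (metis SigmaE atLeastAtMost_iff lessThan_iff nth_mem)
    have "z \<noteq> 0" using zl(2) set_zs by auto
    then show "\<beta> $ c * (\<Sum>j<2*k. coeff chi j * Z_entry (Zcols ! c) (x - int k + 1 + int j)) = 0"
      using root_power_solves_recurrence[OF degree_char_poly_less _ zl(3,4), of "x - int k + 1"]
      unfolding zl(1) Z_entry_def by (simp add: mult_ac)
  qed
  finally show ?thesis .
qed

definition col_index :: "complex \<times> nat \<Rightarrow> nat" where
  "col_index c = (THE i. i < length Zcols \<and> Zcols ! i = c)"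

lemma col_index_nth: "i < length Zcols \<Longrightarrow> col_index (Zcols ! i) = i"
  unfolding col_index_def using distinct_Z_cols by (intro the_equality) (auto simp: nth_eq_iff_index_eq)

lemma col_index_in:
  assumes "c \<in> set Zcols"
  shows "col_index c < length Zcols" "Zcols ! col_index c = c"
  using assms col_index_nth by (metis in_set_conv_nth)+

lemma Z_comb_eq_exp_poly_sum:
  "Z_comb \<beta> e = (\<Sum>z\<in>set zs. poly (\<Sum>l\<in>{1..order z chi}. monom (\<beta> $ col_index (z, l)) (l - 1)) (of_int e) * z powi e)"
proof -
  have "Z_comb \<beta> e = (\<Sum>c\<in>set Zcols. \<beta> $ col_index c * Z_entry c e)"
    unfolding Z_comb_def
    by (rule sum.reindex_bij_witness[of _ col_index "\<lambda>i. Zcols ! i"]) (auto simp: col_index_nth col_index_in)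
  also have "\<dots> = (\<Sum>z\<in>set zs. \<Sum>l\<in>{1..order z chi}. \<beta> $ col_index (z, l) * Z_entry (z, l) e)"
    unfolding set_Z_cols by (subst sum.Sigma) auto
  also have "\<dots> = (\<Sum>z\<in>set zs. poly (\<Sum>l\<in>{1..order z chi}. monom (\<beta> $ col_index (z, l)) (l - 1)) (of_int e) * z powi e)"
    unfolding poly_sum poly_monom sum_distrib_right Z_entry_def by (simp add: mult_ac)
  finally show ?thesis .
qed

lemma Z_comb_vanishing_imp_zero:
  assumes \<beta>: "\<beta> \<in> carrier_vec R" and vanish: "\<And>i0. i0 < N + R - 1 \<Longrightarrow> Z_comb \<beta> (int i0 + 2 - int KQ) = 0"
  shows "\<beta> = 0\<^sub>v R"
proof -
  define Pz where "Pz z = (\<Sum>l\<in>{1..order z chi}. monom (\<beta> $ col_index (z, l)) (l - 1))" for z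
  have coeff_Pz: "coeff (Pz z) n = (if n < order z chi then \<beta> $ col_index (z, n + 1) else 0)" for z n
  proof -
    have "coeff (Pz z) n = (\<Sum>l\<in>{1..order z chi}. if l = n + 1 then \<beta> $ col_index (z, l) else 0)"
      unfolding Pz_def coeff_sum by (intro sum.cong refl) (auto simp: coeff_monom)
    also have "\<dots> = (if n < order z chi then \<beta> $ col_index (z, n + 1) else 0)"
      by (subst sum.delta) auto
    finally show ?thesis .
  qed
  have "\<forall>z\<in>set zs. Pz z = 0"
  proof (rule exp_poly_vanishing_imp_zero[where m = "\<lambda>z. order z chi" and L = "N + R - 1" and e = "2 - int KQ"])
    show "0 \<notin> set zs" using set_zs by blast
    show "(\<Sum>z\<in>set zs. order z chi) \<le> N + R - 1" using sum_order_nonzero_roots[OF set_zs] N_ge_2 by simp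
    show "\<forall>t<N + R - 1. (\<Sum>z\<in>set zs. poly (Pz z) (of_int (2 - int KQ + int t)) * z powi (2 - int KQ + int t)) = 0"
    proof (intro allI impI)
      fix t assume "t < N + R - 1"
      then have "Z_comb \<beta> (int t + 2 - int KQ) = 0" by (rule vanish)
      moreover have "int t + 2 - int KQ = 2 - int KQ + int t" by simp
      ultimately show "(\<Sum>z\<in>set zs. poly (Pz z) (of_int (2 - int KQ + int t)) * z powi (2 - int KQ + int t)) = 0"
        unfolding Pz_def Z_comb_eq_exp_poly_sum by simp
    qed
  qed (simp_all add: coeff_Pz)
  show ?thesis
  proof (rule eq_vecI)
    fix c assume "c < dim_vec (0\<^sub>v R)"
    hence c: "c < length Zcols" using length_Z_cols by simp
    then obtain z l where zl: "Zcols ! c = (z, l)" "z \<in> set zs" "1 \<le> l" "l \<le> order z chi"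
      using set_Z_cols by (metis SigmaE atLeastAtMost_iff nth_mem)
    have "coeff (Pz z) (l - 1) = 0" using \<open>\<forall>z\<in>set zs. Pz z = 0\<close> zl(2) by simp
    moreover have "l - 1 + 1 = l" "l - 1 < order z chi" using zl(3,4) by auto
    ultimately have "\<beta> $ col_index (z, l) = 0" unfolding coeff_Pz by simp
    thus "\<beta> $ c = 0\<^sub>v R $ c" using col_index_nth[OF c] zl(1) c length_Z_cols by simp
  qed (use \<beta> in simp)
qed

lemma accordion_index:
  "a0 < R \<Longrightarrow> m0 < N + R - 1 \<Longrightarrow> A i $$ (a0, m0) =
   (if a0 + 1 < KQ then (if m0 = a0 then 1 else 0)
    else if a0 + 1 = KQ then (if KQ \<le> m0 + 1 \<and> m0 + 1 \<le> KQ + i - 1 then 1 else 0)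
    else (if m0 + 1 = N + a0 then 1 else 0))"
  unfolding accordion_def by (simp add: Let_def)

lemma accordion_mult_vec:
  assumes y: "y \<in> carrier_vec (N + R - 1)" and a0: "a0 < R" and i: "i \<le> N"
  shows "(A i *\<^sub>v y) $ a0 = (if a0 < KQ - 1 then y $ a0
     else if a0 = KQ - 1 then (\<Sum>m0\<in>{KQ - 1..<KQ - 1 + i}. y $ m0) else y $ (N + a0 - 1))"
proof -
  let ?n = "N + R - 1"
  have row: "(A i *\<^sub>v y) $ a0 = (\<Sum>m0<?n. A i $$ (a0, m0) * y $ m0)"
    using y a0 accordion_carrier[of i] by (auto simp: scalar_prod_def atLeast0LessThan intro!: sum.cong)
  consider "a0 < KQ - 1" | "a0 = KQ - 1" | "KQ - 1 < a0" by linarith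
  then show ?thesis
  proof cases
    case 1
    have "(\<Sum>m0<?n. A i $$ (a0, m0) * y $ m0) = (\<Sum>m0<?n. if m0 = a0 then y $ m0 else 0)"
      using 1 a0 by (intro sum.cong refl) (simp add: accordion_index)
    also have "\<dots> = y $ a0" using 1 KP_props(1) by simp
    finally show ?thesis using row 1 by simp
  next
    case 2
    have "(\<Sum>m0<?n. A i $$ (a0, m0) * y $ m0) = (\<Sum>m0<?n. if m0 \<in> {KQ - 1..<KQ - 1 + i} then y $ m0 else 0)"
      using 2 a0 KQ_props(1) by (intro sum.cong refl) (auto simp: accordion_index)
    also have "\<dots> = (\<Sum>m0\<in>{..<?n} \<inter> {KQ - 1..<KQ - 1 + i}. y $ m0)"
      by (rule sum.inter_restrict[symmetric]) simp
    also have "{..<?n} \<inter> {KQ - 1..<KQ - 1 + i} = {KQ - 1..<KQ - 1 + i}"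
      using i KP_props(1) KQ_props(1) by auto
    finally show ?thesis using row 2 by simp
  next
    case 3
    have "(\<Sum>m0<?n. A i $$ (a0, m0) * y $ m0) = (\<Sum>m0<?n. if m0 = N + a0 - 1 then y $ m0 else 0)"
      using 3 a0 N_ge_2 by (intro sum.cong refl) (auto simp: accordion_index)
    also have "\<dots> = y $ (N + a0 - 1)" using a0 N_ge_2 by simp
    finally show ?thesis using row 3 by simp
  qed
qed

lemma accordion_Z_mult_vec:
  assumes \<beta>: "\<beta> \<in> carrier_vec R" and a0: "a0 < R" and i: "i \<le> N"
  shows "(A i * Z *\<^sub>v \<beta>) $ a0 = (if a0 < KQ - 1 then Z_comb \<beta> (int a0 + 2 - int KQ)
     else if a0 = KQ - 1 then (\<Sum>e\<in>{1..int i}. Z_comb \<beta> e) else Z_comb \<beta> (int N + int a0 + 1 - int KQ))"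
proof -
  have low: "a0 < KQ - 1 \<Longrightarrow> (Z *\<^sub>v \<beta>) $ a0 = Z_comb \<beta> (int a0 + 2 - int KQ)"
    using Z_mult_vec[OF \<beta>] a0 N_ge_2 by simp
  have high: "(Z *\<^sub>v \<beta>) $ (N + a0 - 1) = Z_comb \<beta> (int N + int a0 + 1 - int KQ)"
    using Z_mult_vec[OF \<beta>, of "N + a0 - 1"] a0 N_ge_2 by (simp add: of_nat_diff algebra_simps)
  have "(\<Sum>m0\<in>{KQ - 1..<KQ - 1 + i}. (Z *\<^sub>v \<beta>) $ m0) =
      (\<Sum>m0\<in>{KQ - 1..<KQ - 1 + i}. Z_comb \<beta> (int m0 + 2 - int KQ))"
    using i KP_props(1) KQ_props(1) by (intro sum.cong refl Z_mult_vec[OF \<beta>]) auto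
  also have "\<dots> = (\<Sum>e\<in>{1..int i}. Z_comb \<beta> e)"
    by (rule sum.reindex_bij_witness[of _ "\<lambda>e. nat (e + int KQ - 2)" "\<lambda>m0. int m0 + 2 - int KQ"])
      (use KQ_props(1) in auto)
  finally have middle: "(\<Sum>m0\<in>{KQ - 1..<KQ - 1 + i}. (Z *\<^sub>v \<beta>) $ m0) = (\<Sum>e\<in>{1..int i}. Z_comb \<beta> e)" .
  have "(A i * Z *\<^sub>v \<beta>) $ a0 = (A i *\<^sub>v (Z *\<^sub>v \<beta>)) $ a0"
    using assoc_mult_mat_vec[OF accordion_carrier Z_carrier \<beta>] by simp
  also have "\<dots> = (if a0 < KQ - 1 then (Z *\<^sub>v \<beta>) $ a0
     else if a0 = KQ - 1 then (\<Sum>m0\<in>{KQ - 1..<KQ - 1 + i}. (Z *\<^sub>v \<beta>) $ m0) else (Z *\<^sub>v \<beta>) $ (N + a0 - 1))"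
    by (rule accordion_mult_vec[OF _ a0 i]) (use Z_carrier \<beta> in simp)
  finally show ?thesis using low middle high by simp
qed

lemma accordion_Z_partial_sum:
  "\<beta> \<in> carrier_vec R \<Longrightarrow> i \<le> N \<Longrightarrow> (A i * Z *\<^sub>v \<beta>) $ (KQ - 1) = (\<Sum>e\<in>{1..int i}. Z_comb \<beta> e)"
  using accordion_Z_mult_vec[of \<beta> "KQ - 1" i] KP_props(1) KQ_props(1) by simp

lemma Z_comb_boundary:
  assumes \<beta>: "\<beta> \<in> carrier_vec R"
    and rows: "\<And>a0. a0 < R \<Longrightarrow> a0 \<noteq> KQ - 1 \<Longrightarrow> (A N * Z *\<^sub>v \<beta>) $ a0 = 0"
  shows "\<And>e. 2 - int KQ \<le> e \<Longrightarrow> e \<le> 0 \<Longrightarrow> Z_comb \<beta> e = 0"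
    and "\<And>e. int N + 1 \<le> e \<Longrightarrow> e \<le> int N + int KP - 1 \<Longrightarrow> Z_comb \<beta> e = 0"
proof -
  fix e assume "2 - int KQ \<le> e" "e \<le> 0"
  then obtain a0 where a0: "a0 < KQ - 1" "a0 < R" "int a0 + 2 - int KQ = e"
    by (intro that[of "nat (e + int KQ - 2)"]) auto
  then show "Z_comb \<beta> e = 0" using accordion_Z_mult_vec[OF \<beta> a0(2), of N] rows[OF a0(2)] by simp
next
  fix e assume "int N + 1 \<le> e" "e \<le> int N + int KP - 1"
  then obtain a0 where a0: "KQ - 1 < a0" "a0 < R" "int N + int a0 + 1 - int KQ = e"
    using KQ_props(1) by (intro that[of "nat (e - int N - 1 + int KQ)"]) auto
  then show "Z_comb \<beta> e = 0" using accordion_Z_mult_vec[OF \<beta> a0(2), of N] rows[OF a0(2)] by simp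
qed

lemma Z_comb_partial_sums_harmonic:
  assumes \<beta>: "\<beta> \<in> carrier_vec R"
    and rows: "\<And>a0. a0 < R \<Longrightarrow> a0 \<noteq> KQ - 1 \<Longrightarrow> (A N * Z *\<^sub>v \<beta>) $ a0 = 0"
    and "0 < i" "i < N"
  shows "(\<Sum>e\<in>{1..int i}. Z_comb \<beta> e) = (\<Sum>j\<le>N. P i j *\<^sub>R (\<Sum>e\<in>{1..int j}. Z_comb \<beta> e))"
  by (rule partial_sums_harmonic[OF Z_comb_recurrence Z_comb_boundary[OF \<beta> rows]]) (use assms in auto)

lemma det_accordion_Z_nonzero: "det (A N * Z) \<noteq> 0"
proof
  assume "det (A N * Z) = 0"
  then obtain \<beta> where \<beta>: "\<beta> \<in> carrier_vec R" "\<beta> \<noteq> 0\<^sub>v R" "A N * Z *\<^sub>v \<beta> = 0\<^sub>v R"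
    using det_0_iff_vec_prod_zero_field[OF accordion_Z_carrier] by blast
  have rows: "\<And>a0. a0 < R \<Longrightarrow> (A N * Z *\<^sub>v \<beta>) $ a0 = 0" using \<beta>(3) by simp
  define h where "h j = (\<Sum>e\<in>{1..int j}. Z_comb \<beta> e)" for j
  have h_0: "h j = 0" if "j \<le> N" for j
  proof (rule leap_harmonic_eq_0[of h])
    show "h N = 0"
      unfolding h_def using accordion_Z_partial_sum[OF \<beta>(1), of N] rows KP_props(1) KQ_props(1) by simp
    show "h i = (\<Sum>j\<le>N. P i j *\<^sub>R h j)" if "0 < i" "i < N" for i
      unfolding h_def by (rule Z_comb_partial_sums_harmonic[OF \<beta>(1) rows that])
  qed (use that in \<open>simp_all add: h_def\<close>)
  have middle: "Z_comb \<beta> e = 0" if "1 \<le> e" "e \<le> int N" for e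
  proof -
    have "{1..e} = insert e {1..e - 1}" using that by auto
    hence "h (nat e) = Z_comb \<beta> e + h (nat (e - 1))" using that unfolding h_def by simp
    thus ?thesis using h_0[of "nat e"] h_0[of "nat (e - 1)"] that by simp
  qed
  have "Z_comb \<beta> e = 0" if "2 - int KQ \<le> e" "e \<le> int N + int KP - 1" for e
  proof -
    consider "e \<le> 0" | "1 \<le> e" "e \<le> int N" | "int N + 1 \<le> e" by linarith
    then show ?thesis using that middle Z_comb_boundary[OF \<beta>(1) rows] by cases auto
  qed
  hence "\<beta> = 0\<^sub>v R"
    by (intro Z_comb_vanishing_imp_zero[OF \<beta>(1)]) (use KP_props(1) KQ_props(1) in auto)
  with \<beta>(2) show False ..
qed

lemma accordion_Z_row_eq:
  assumes "r < R" "r \<noteq> KQ - 1" "c < R"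
  shows "(A i * Z) $$ (r, c) = (A N * Z) $$ (r, c)"
proof -
  have "r + 1 \<noteq> KQ" using assms KQ_props(1) by auto
  note dims = carrier_matD[OF accordion_carrier[of i]] carrier_matD[OF accordion_carrier[of N]]
    carrier_matD[OF Z_carrier]
  have "row (A i) r = row (A N) r"
  proof (rule eq_vecI)
    fix m assume "m < dim_vec (row (A N) r)"
    then show "row (A i) r $ m = row (A N) r $ m"
      using assms \<open>r + 1 \<noteq> KQ\<close> dims by (simp add: accordion_index)
  qed (use dims in simp)
  then show ?thesis using assms dims by simp
qed

definition cramer_vec :: "complex vec" where
  "cramer_vec = vec R (\<lambda>c. cofactor (A N * Z) (KQ - 1) c / det (A N * Z))"

lemma cramer_vec_carrier: "cramer_vec \<in> carrier_vec R"
  unfolding cramer_vec_def by simp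

lemma KQ_index: "KQ - 1 < R"
  using KP_props(1) KQ_props(1) by simp

lemma accordion_Z_mult_cramer_vec:
  "r < R \<Longrightarrow> (A N * Z *\<^sub>v cramer_vec) $ r = (if r = KQ - 1 then 1 else 0)"
  unfolding cramer_vec_def
  by (rule cramer_rule_unit_vec[OF accordion_Z_carrier det_accordion_Z_nonzero KQ_index])

lemma accordion_Z_mult_cramer_vec_row:
  "(A i * Z *\<^sub>v cramer_vec) $ (KQ - 1) = det (A i * Z) / det (A N * Z)"
  unfolding cramer_vec_def
  by (rule cramer_rule_other_matrix[OF accordion_Z_carrier accordion_Z_carrier KQ_index accordion_Z_row_eq])

lemma absorb_prob_eq_partial_sum:
  assumes "i \<le> N"
  shows "complex_of_real (u i) = (\<Sum>e\<in>{1..int i}. Z_comb cramer_vec e)"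
proof -
  define h where "h j = (\<Sum>e\<in>{1..int j}. Z_comb cramer_vec e)" for j
  have rows: "(A N * Z *\<^sub>v cramer_vec) $ a0 = 0" if "a0 < R" "a0 \<noteq> KQ - 1" for a0
    using accordion_Z_mult_cramer_vec[OF that(1)] unfolding if_not_P[OF that(2)] .
  have "complex_of_real (u i) - h i = 0"
  proof (rule leap_harmonic_eq_0)
    have "h N = 1"
      unfolding h_def using accordion_Z_partial_sum[OF cramer_vec_carrier, of N]
        accordion_Z_mult_cramer_vec[of "KQ - 1"] KP_props(1) KQ_props(1) by simp
    then show "complex_of_real (u N) - h N = 0" using absorb_prob_N by simp
    show "complex_of_real (u j) - h j = (\<Sum>l\<le>N. P j l *\<^sub>R (complex_of_real (u l) - h l))"
      if "0 < j" "j < N" for j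
    proof -
      have "h j = (\<Sum>l\<le>N. P j l *\<^sub>R h l)"
        unfolding h_def by (rule Z_comb_partial_sums_harmonic[OF cramer_vec_carrier rows that])
      moreover have "complex_of_real (u j) = (\<Sum>l\<le>N. P j l *\<^sub>R complex_of_real (u l))"
        using absorb_prob_harmonic[OF that] by (simp add: scaleR_conv_of_real)
      ultimately show ?thesis by (simp add: scaleR_diff_right sum_subtractf)
    qed
  qed (use assms absorb_prob_0 in \<open>simp_all add: h_def\<close>)
  then show ?thesis unfolding h_def by simp
qed

lemma absorb_prob_eq_det_ratio:
  "i \<le> N \<Longrightarrow> complex_of_real (u i) = det (A i * Z) / det (A N * Z)"
  using absorb_prob_eq_partial_sum accordion_Z_partial_sum[OF cramer_vec_carrier]
    accordion_Z_mult_cramer_vec_row by simp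

end

theorem mainTheorem2:
  fixes k N :: nat and p q :: "nat \<Rightarrow> real" and zs :: "complex list"
  assumes "k \<ge> 1"
    and "\<forall>j\<in>{1..k}. p j \<ge> 0" and "\<forall>j\<in>{1..k}. q j \<ge> 0"
    and "(\<Sum>j=1..k. p j + q j) = 1"
    and "(\<Sum>j=1..k. p j) > 0" and "(\<Sum>j=1..k. q j) > 0"
    and "N \<ge> kp k p + kq k q"
    and "distinct zs"
    and "set zs = {z. z \<noteq> 0 \<and> poly (char_poly k p q) z = 0}"
  shows "det (accordion (kq k q) (kp k p) N N * Z_mat (kq k q) (kp k p + kq k q - 1) N (char_poly k p q) zs) \<noteq> 0
    \<and> (\<forall>i\<in>{0..N}. complex_of_real (absorb_prob k p q N i) =
         det (accordion (kq k q) (kp k p) N i * Z_mat (kq k q) (kp k p + kq k q - 1) N (char_poly k p q) zs)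
       / det (accordion (kq k q) (kp k p) N N * Z_mat (kq k q) (kp k p + kq k q - 1) N (char_poly k p q) zs))"
proof -
  interpret random_leap_roots k N p q zs
    using assms by unfold_locales auto
  show ?thesis using det_accordion_Z_nonzero absorb_prob_eq_det_ratio by auto
qed

end
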